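(* For every $n\ge 3$, the cycle $C_n$ on $n$ vertices satisfies $\phi(C_n)\le 6^{n/4}$, with equality if and only if $n=4$.
   Context: A subset $F$ of vertices of a graph $G$ is a dissociation set if $G[F]$ has maximum degree at most $1$; a maximal dissociation set is one not properly contained in another dissociation set; $\phi(G)$ is the number of maximal dissociation sets of $G$. *)

theory Defs
  imports Complex_Main
begin

text \<open>A (finite simple) graph is given by a vertex set V and an adjacency
relation E, assumed symmetric and irreflexive where relevant.\<close>

definition dissociation_set :: "'a set \<Rightarrow> ('a \<Rightarrow> 'a \<Rightarrow> bool) \<Rightarrow> 'a set \<Rightarrow> bool" where
  "dissociation_set V E F \<longleftrightarrow>
     F \<subseteq> V \<and> (\<forall>v\<in>F. card {u \<in> F. E v u} \<le> 1)"

definition maximal_dissociation_set :: "'a set \<Rightarrow> ('a \<Rightarrow> 'a \<Rightarrow> bool) \<Rightarrow> 'a set \<Rightarrow> bool" where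
  "maximal_dissociation_set V E F \<longleftrightarrow>
     dissociation_set V E F \<and> (\<forall>F'. dissociation_set V E F' \<and> F \<subseteq> F' \<longrightarrow> F' = F)"

definition phi :: "'a set \<Rightarrow> ('a \<Rightarrow> 'a \<Rightarrow> bool) \<Rightarrow> nat" where
  "phi V E = card {F. maximal_dissociation_set V E F}"

definition cycle_adj :: "nat \<Rightarrow> nat \<Rightarrow> nat \<Rightarrow> bool" where
  "cycle_adj n i j \<longleftrightarrow> i < n \<and> j < n \<and> (j = (i + 1) mod n \<or> i = (j + 1) mod n)"

end

theory Submission
  imports Defs
begin

text \<open>
  Reading a maximal dissociation set of \<open>C\<^sub>n\<close> along the path \<open>0, \<dots>, n - 1\<close> gives a
  0/1-word in which no three consecutive letters are equal (dissociation, resp. maximality at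
  the middle vertex) and neither 0100 nor 0010 occurs (the isolated vertex could be given a
  partner). The number of such words of length \<open>k\<close> is submultiplicative in \<open>k\<close>; there are
  22 < 6 powr (7/4) of them for \<open>k = 7\<close>, and counting them for \<open>k = 7, \<dots>, 13\<close> gives a strict
  bound for every \<open>n \<ge> 7\<close>. The cycles \<open>C\<^sub>3, \<dots>, C\<^sub>6\<close> have 3, 6, 5 and 5 maximal
  dissociation sets, so equality holds only for \<open>n = 4\<close>.
\<close>

definition window3_ok :: "bool \<Rightarrow> bool \<Rightarrow> bool \<Rightarrow> bool" where
  "window3_ok a b c \<longleftrightarrow> \<not> (a \<and> b \<and> c) \<and> (a \<or> b \<or> c)"

definition window4_ok :: "bool \<Rightarrow> bool \<Rightarrow> bool \<Rightarrow> bool \<Rightarrow> bool" where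
  "window4_ok a b c d \<longleftrightarrow> \<not> (\<not> a \<and> b \<and> \<not> c \<and> \<not> d) \<and> \<not> (\<not> a \<and> \<not> b \<and> c \<and> \<not> d)"

fun mds_word :: "bool list \<Rightarrow> bool" where
  "mds_word (a # b # c # d # r) \<longleftrightarrow>
     window3_ok a b c \<and> window4_ok a b c d \<and> mds_word (b # c # d # r)"
| "mds_word [a, b, c] \<longleftrightarrow> window3_ok a b c"
| "mds_word _ \<longleftrightarrow> True"

lemma all_nat_unfold: "(\<forall>i. P i) \<longleftrightarrow> P 0 \<and> (\<forall>i. P (Suc i))"
  by (metis not0_implies_Suc)

lemma mds_word_iff_nth:
  "mds_word bs \<longleftrightarrow>
     (\<forall>i. i + 2 < length bs \<longrightarrow> window3_ok (bs ! i) (bs ! (i + 1)) (bs ! (i + 2))) \<and>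
     (\<forall>i. i + 3 < length bs \<longrightarrow> window4_ok (bs ! i) (bs ! (i + 1)) (bs ! (i + 2)) (bs ! (i + 3)))"
proof (induction bs rule: mds_word.induct)
  case (1 a b c d r)
  show ?case
    by (subst (1 2) all_nat_unfold) (auto simp: "1.IH")
next
  case (2 a b c)
  show ?case
    by (subst all_nat_unfold) simp
qed auto

lemma mds_word_ConsD: "mds_word (x # xs) \<Longrightarrow> mds_word xs"
  by (cases xs rule: mds_word.cases) auto

lemma mds_word_appendD:
  assumes "mds_word (xs @ ys)"
  shows "mds_word xs" and "mds_word ys"
proof -
  show "mds_word xs"
    unfolding mds_word_iff_nth
  proof (intro conjI allI impI)
    fix i
    assume i: "i + 2 < length xs"
    then have "window3_ok ((xs @ ys) ! i) ((xs @ ys) ! (i + 1)) ((xs @ ys) ! (i + 2))"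
      using assms unfolding mds_word_iff_nth by simp
    with i show "window3_ok (xs ! i) (xs ! (i + 1)) (xs ! (i + 2))"
      by (simp add: nth_append)
  next
    fix i
    assume i: "i + 3 < length xs"
    then have "window4_ok ((xs @ ys) ! i) ((xs @ ys) ! (i + 1)) ((xs @ ys) ! (i + 2)) ((xs @ ys) ! (i + 3))"
      using assms unfolding mds_word_iff_nth by simp
    with i show "window4_ok (xs ! i) (xs ! (i + 1)) (xs ! (i + 2)) (xs ! (i + 3))"
      by (simp add: nth_append)
  qed
  show "mds_word ys"
    using assms by (induction xs) (auto dest: mds_word_ConsD)
qed

definition mds_words :: "nat \<Rightarrow> bool list set" where
  "mds_words k = {bs. length bs = k \<and> mds_word bs}"

fun mds_word_list :: "nat \<Rightarrow> bool list list" where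
  "mds_word_list 0 = [[]]"
| "mds_word_list (Suc k) =
     filter mds_word (concat (map (\<lambda>xs. [False # xs, True # xs]) (mds_word_list k)))"

lemma mds_words_subset_list: "mds_words k \<subseteq> set (mds_word_list k)"
proof (induction k)
  case 0
  then show ?case by (auto simp: mds_words_def)
next
  case (Suc k)
  show ?case
  proof
    fix bs
    assume "bs \<in> mds_words (Suc k)"
    then obtain b xs where bs: "bs = b # xs" "length xs = k" "mds_word (b # xs)"
      by (cases bs) (auto simp: mds_words_def)
    then have "xs \<in> set (mds_word_list k)"
      using Suc.IH mds_word_ConsD by (auto simp: mds_words_def)
    with bs show "bs \<in> set (mds_word_list (Suc k))"
      by (cases b) auto
  qed
qed

lemma finite_mds_words: "finite (mds_words k)"
  using mds_words_subset_list finite_subset by blast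

lemma card_mds_words_le_length: "card (mds_words k) \<le> length (mds_word_list k)"
  by (meson mds_words_subset_list List.finite_set card_length card_mono le_trans)

lemma card_mds_words_add_le: "card (mds_words (a + b)) \<le> card (mds_words a) * card (mds_words b)"
proof -
  let ?split = "\<lambda>bs. (take a bs, drop a bs)"
  have "inj_on ?split (mds_words (a + b))"
    by (rule inj_onI) (metis append_take_drop_id prod.inject)
  moreover have "?split ` mds_words (a + b) \<subseteq> mds_words a \<times> mds_words b"
    using mds_word_appendD[of "take a bs" "drop a bs" for bs] by (auto simp: mds_words_def)
  ultimately have "card (mds_words (a + b)) \<le> card (mds_words a \<times> mds_words b)"
    by (meson card_inj_on_le finite_SigmaI finite_mds_words)
  then show ?thesis
    by (simp add: card_cartesian_product)
qed

lemma length_mds_word_list_pow_less: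
  assumes "7 \<le> k" "k \<le> 13"
  shows "length (mds_word_list k) ^ 4 < 6 ^ k"
proof -
  have "map (\<lambda>k. length (mds_word_list k)) [7..<14] = [22, 30, 42, 59, 83, 116, 162]"
    by code_simp
  then have "list_all (\<lambda>k. length (mds_word_list k) ^ 4 < 6 ^ k) [7..<14]"
    by (simp add: upt_rec)
  moreover have "k \<in> set [7..<14]"
    using assms unfolding set_upt by simp
  ultimately show ?thesis
    unfolding list_all_iff by blast
qed

lemma less_powr_if_power_less:
  fixes b c :: real
  assumes "0 \<le> c" "0 < b" "0 < m" "c ^ m < b ^ k"
  shows "c < b powr (real k / real m)"
proof (rule ccontr)
  assume "\<not> ?thesis"
  then have "(b powr (real k / real m)) ^ m \<le> c ^ m"
    by (simp add: power_mono)
  moreover have "(b powr (real k / real m)) ^ m = b ^ k"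
    using assms(2,3) by (simp add: powr_realpow[symmetric] powr_powr)
  ultimately show False
    using assms(4) by simp
qed

lemma less_6_powr_quarter: "(m::nat) ^ 4 < 6 ^ k \<Longrightarrow> real m < 6 powr (real k / 4)"
  using less_powr_if_power_less[of "real m" 6 4 k] by (simp flip: of_nat_power)

lemma card_mds_words_less: "7 \<le> k \<Longrightarrow> real (card (mds_words k)) < 6 powr (real k / 4)"
proof (induction k rule: less_induct)
  case (less k)
  show ?case
  proof (cases "k \<le> 13")
    case True
    with less.prems have "length (mds_word_list k) ^ 4 < 6 ^ k"
      by (rule length_mds_word_list_pow_less)
    moreover have "card (mds_words k) ^ 4 \<le> length (mds_word_list k) ^ 4"
      by (rule power_mono[OF card_mds_words_le_length]) simp
    ultimately have "card (mds_words k) ^ 4 < 6 ^ k"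
      by linarith
    then show ?thesis
      by (rule less_6_powr_quarter)
  next
    case False
    have "card (mds_words k) \<le> card (mds_words 7) * card (mds_words (k - 7))"
      using card_mds_words_add_le[of 7 "k - 7"] False by simp
    then have "real (card (mds_words k)) \<le> real (card (mds_words 7)) * real (card (mds_words (k - 7)))"
      by (metis of_nat_le_iff of_nat_mult)
    also have "\<dots> < 6 powr (real 7 / 4) * 6 powr (real (k - 7) / 4)"
      using less.IH[of 7] less.IH[of "k - 7"] False by (intro mult_strict_mono) auto
    also have "\<dots> = 6 powr (real k / 4)"
      using False by (simp add: powr_add[symmetric] of_nat_diff add_divide_distrib[symmetric])
    finally show ?thesis .
  qed
qed

definition cycle_succ :: "nat \<Rightarrow> nat \<Rightarrow> nat" where
  "cycle_succ n v = (if v + 1 = n then 0 else v + 1)"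

definition cycle_pred :: "nat \<Rightarrow> nat \<Rightarrow> nat" where
  "cycle_pred n v = (if v = 0 then n - 1 else v - 1)"

definition cycle_dissociated :: "nat \<Rightarrow> nat set \<Rightarrow> bool" where
  "cycle_dissociated n F \<longleftrightarrow> (\<forall>v\<in>F. \<not> (cycle_succ n v \<in> F \<and> cycle_pred n v \<in> F))"

text \<open>The quantifier ranges over a list so that small cases can be evaluated by \<open>code_simp\<close>.\<close>

definition cycle_maximal_dissociated :: "nat \<Rightarrow> nat set \<Rightarrow> bool" where
  "cycle_maximal_dissociated n F \<longleftrightarrow>
     cycle_dissociated n F \<and> (\<forall>v\<in>set [0..<n]. v \<notin> F \<longrightarrow> \<not> cycle_dissociated n (insert v F))"

lemma cycle_succ_less: "v < n \<Longrightarrow> cycle_succ n v < n"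
  by (auto simp: cycle_succ_def)

lemma cycle_pred_less: "v < n \<Longrightarrow> cycle_pred n v < n"
  by (auto simp: cycle_pred_def)

lemma cycle_succ_eq_iff: "u < n \<Longrightarrow> v < n \<Longrightarrow> cycle_succ n u = v \<longleftrightarrow> u = cycle_pred n v"
  by (auto simp: cycle_succ_def cycle_pred_def)

lemma cycle_succ_pred_distinct:
  assumes "3 \<le> n" "v < n"
  shows "cycle_succ n v \<noteq> cycle_pred n v" "cycle_succ n v \<noteq> v" "cycle_pred n v \<noteq> v"
    "cycle_succ n (cycle_succ n v) \<noteq> v" "cycle_pred n (cycle_pred n v) \<noteq> v"
  using assms by (auto simp: cycle_succ_def cycle_pred_def)

lemma cycle_adj_iff:
  assumes "3 \<le> n" "v < n"
  shows "cycle_adj n v u \<longleftrightarrow> u = cycle_succ n v \<or> u = cycle_pred n v"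
proof -
  have "(w + 1) mod n = cycle_succ n w" if "w < n" for w
    using that by (auto simp: cycle_succ_def)
  then show ?thesis
    using assms cycle_succ_eq_iff cycle_succ_less cycle_pred_less
    unfolding cycle_adj_def by metis
qed

lemma card_le_1_iff_not_both:
  assumes "a \<noteq> b"
  shows "card {u \<in> F. u = a \<or> u = b} \<le> 1 \<longleftrightarrow> \<not> (a \<in> F \<and> b \<in> F)"
proof -
  have "{u \<in> F. u = a \<or> u = b} = (if a \<in> F then {a} else {}) \<union> (if b \<in> F then {b} else {})"
    by auto
  with assms show ?thesis
    by auto
qed

lemma dissociation_set_cycle_iff:
  assumes n: "3 \<le> n"
  shows "dissociation_set {0..<n} (cycle_adj n) F \<longleftrightarrow> F \<subseteq> {0..<n} \<and> cycle_dissociated n F"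
proof -
  have "card {u \<in> F. cycle_adj n v u} \<le> 1 \<longleftrightarrow> \<not> (cycle_succ n v \<in> F \<and> cycle_pred n v \<in> F)"
    if "F \<subseteq> {0..<n}" "v \<in> F" for v
  proof -
    from that have v: "v < n"
      by auto
    have "{u \<in> F. cycle_adj n v u} = {u \<in> F. u = cycle_succ n v \<or> u = cycle_pred n v}"
      using cycle_adj_iff[OF n v] by auto
    moreover have "cycle_succ n v \<noteq> cycle_pred n v"
      using cycle_succ_pred_distinct[OF n v] by simp
    ultimately show ?thesis
      using card_le_1_iff_not_both by simp
  qed
  then show ?thesis
    unfolding dissociation_set_def cycle_dissociated_def by blast
qed

lemma cycle_dissociated_subset: "cycle_dissociated n F \<Longrightarrow> G \<subseteq> F \<Longrightarrow> cycle_dissociated n G"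
  unfolding cycle_dissociated_def by blast

lemma maximal_dissociation_set_cycle_iff:
  assumes n: "3 \<le> n"
  shows "maximal_dissociation_set {0..<n} (cycle_adj n) F \<longleftrightarrow>
           F \<subseteq> {0..<n} \<and> cycle_maximal_dissociated n F"
    (is "?maximal \<longleftrightarrow> _")
proof
  assume ?maximal
  then have F: "F \<subseteq> {0..<n}" "cycle_dissociated n F"
    unfolding maximal_dissociation_set_def dissociation_set_cycle_iff[OF n] by auto
  have "\<not> cycle_dissociated n (insert v F)" if "v < n" "v \<notin> F" for v
  proof
    assume "cycle_dissociated n (insert v F)"
    with F that have "dissociation_set {0..<n} (cycle_adj n) (insert v F)"
      unfolding dissociation_set_cycle_iff[OF n] by auto
    with \<open>?maximal\<close> have "insert v F = F"
      unfolding maximal_dissociation_set_def by blast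
    with that show False
      by auto
  qed
  with F show "F \<subseteq> {0..<n} \<and> cycle_maximal_dissociated n F"
    unfolding cycle_maximal_dissociated_def by auto
next
  assume F: "F \<subseteq> {0..<n} \<and> cycle_maximal_dissociated n F"
  have "F' = F" if F': "dissociation_set {0..<n} (cycle_adj n) F'" "F \<subseteq> F'" for F'
  proof (rule ccontr)
    assume "F' \<noteq> F"
    with F' obtain v where v: "v \<in> F'" "v \<notin> F"
      by blast
    from F' have "F' \<subseteq> {0..<n}" "cycle_dissociated n F'"
      unfolding dissociation_set_cycle_iff[OF n] by auto
    with v F' have "v < n" "cycle_dissociated n (insert v F)"
      using cycle_dissociated_subset[of n F' "insert v F"] by auto
    with F v show False
      unfolding cycle_maximal_dissociated_def by auto
  qed
  with F show ?maximal
    unfolding maximal_dissociation_set_def dissociation_set_cycle_iff[OF n]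
      cycle_maximal_dissociated_def by auto
qed

lemma cycle_dissociated_insert:
  assumes n: "3 \<le> n" and F: "F \<subseteq> {0..<n}" "cycle_dissociated n F" and v: "v < n"
    and not_both: "\<not> (cycle_succ n v \<in> F \<and> cycle_pred n v \<in> F)"
    and succ: "cycle_succ n v \<in> F \<Longrightarrow> cycle_succ n (cycle_succ n v) \<notin> F"
    and pred: "cycle_pred n v \<in> F \<Longrightarrow> cycle_pred n (cycle_pred n v) \<notin> F"
  shows "cycle_dissociated n (insert v F)"
  unfolding cycle_dissociated_def
proof
  fix w
  assume "w \<in> insert v F"
  then consider "w = v" | "w \<in> F" "w \<noteq> v" "w < n"
    using F(1) by (metis atLeastLessThan_iff insertE subsetD)
  then show "\<not> (cycle_succ n w \<in> insert v F \<and> cycle_pred n w \<in> insert v F)"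
  proof cases
    case 1
    then show ?thesis
      using not_both cycle_succ_pred_distinct[OF n v] by auto
  next
    case 2
    show ?thesis
    proof (cases "cycle_succ n w = v")
      case True
      then have "w = cycle_pred n v"
        using cycle_succ_eq_iff[OF 2(3) v] by simp
      with 2 pred cycle_succ_pred_distinct(5)[OF n v] show ?thesis
        by auto
    next
      case succ_not_v: False
      show ?thesis
      proof (cases "cycle_pred n w = v")
        case True
        then have "w = cycle_succ n v"
          using cycle_succ_eq_iff[OF v 2(3)] by auto
        with 2 succ cycle_succ_pred_distinct(4)[OF n v] show ?thesis
          by auto
      next
        case False
        with 2 succ_not_v F(2) show ?thesis
          unfolding cycle_dissociated_def by auto
      qed
    qed
  qed
qed

definition indicator_word :: "nat \<Rightarrow> nat set \<Rightarrow> bool list" where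
  "indicator_word n F = map (\<lambda>i. i \<in> F) [0..<n]"

lemma length_indicator_word [simp]: "length (indicator_word n F) = n"
  by (simp add: indicator_word_def)

lemma nth_indicator_word [simp]: "i < n \<Longrightarrow> indicator_word n F ! i \<longleftrightarrow> i \<in> F"
  by (simp add: indicator_word_def)

lemma inj_on_indicator_word: "inj_on (indicator_word n) (Pow {0..<n})"
proof (rule inj_onI)
  fix F G
  assume "F \<in> Pow {0..<n}" "G \<in> Pow {0..<n}" "indicator_word n F = indicator_word n G"
  then show "F = G"
    by (metis PowD atLeastLessThan_iff nth_indicator_word subsetD subset_antisym subsetI)
qed

lemma mds_word_indicator_word:
  assumes n: "3 \<le> n" and F: "F \<subseteq> {0..<n}" "cycle_maximal_dissociated n F"
  shows "mds_word (indicator_word n F)"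
proof -
  have dissociated: "cycle_dissociated n F"
    and maximal: "\<And>v. v < n \<Longrightarrow> v \<notin> F \<Longrightarrow> \<not> cycle_dissociated n (insert v F)"
    using F(2) unfolding cycle_maximal_dissociated_def by auto
  have path: "cycle_succ n i = Suc i" "cycle_pred n (Suc i) = i" if "Suc i < n" for i
    using that by (auto simp: cycle_succ_def cycle_pred_def)
  note insert_dissociated = cycle_dissociated_insert[OF n F(1) dissociated]
  show ?thesis
    unfolding mds_word_iff_nth length_indicator_word
  proof (intro conjI allI impI)
    fix i
    assume i: "i + 2 < n"
    have "Suc i \<in> F \<Longrightarrow> \<not> (cycle_succ n (Suc i) \<in> F \<and> cycle_pred n (Suc i) \<in> F)"
      using dissociated unfolding cycle_dissociated_def by blast
    with i have "\<not> (i \<in> F \<and> Suc i \<in> F \<and> Suc (Suc i) \<in> F)"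
      by (auto simp: path)
    moreover have "i \<in> F \<or> Suc i \<in> F \<or> Suc (Suc i) \<in> F"
    proof (rule ccontr)
      assume none: "\<not> ?thesis"
      have "cycle_dissociated n (insert (Suc i) F)"
        by (rule insert_dissociated) (use i none in \<open>simp_all add: path\<close>)
      with maximal[of "Suc i"] i none show False
        by simp
    qed
    ultimately show "window3_ok (indicator_word n F ! i) (indicator_word n F ! (i + 1))
        (indicator_word n F ! (i + 2))"
      using i by (simp add: window3_ok_def)
  next
    fix i
    assume i: "i + 3 < n"
    have "\<not> (i \<notin> F \<and> Suc i \<in> F \<and> Suc (Suc i) \<notin> F \<and> Suc (Suc (Suc i)) \<notin> F)"
    proof
      assume pattern: "i \<notin> F \<and> Suc i \<in> F \<and> Suc (Suc i) \<notin> F \<and> Suc (Suc (Suc i)) \<notin> F"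
      have "cycle_dissociated n (insert (Suc (Suc i)) F)"
        by (rule insert_dissociated) (use i pattern in \<open>simp_all add: path\<close>)
      with maximal[of "Suc (Suc i)"] i pattern show False
        by simp
    qed
    moreover have "\<not> (i \<notin> F \<and> Suc i \<notin> F \<and> Suc (Suc i) \<in> F \<and> Suc (Suc (Suc i)) \<notin> F)"
    proof
      assume pattern: "i \<notin> F \<and> Suc i \<notin> F \<and> Suc (Suc i) \<in> F \<and> Suc (Suc (Suc i)) \<notin> F"
      have "cycle_dissociated n (insert (Suc i) F)"
        by (rule insert_dissociated) (use i pattern in \<open>simp_all add: path\<close>)
      with maximal[of "Suc i"] i pattern show False
        by simp
    qed
    ultimately show "window4_ok (indicator_word n F ! i) (indicator_word n F ! (i + 1))
        (indicator_word n F ! (i + 2)) (indicator_word n F ! (i + 3))"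
      using i by (simp add: window4_ok_def eval_nat_numeral)
  qed
qed

lemma phi_cycle_le_card_mds_words:
  assumes n: "3 \<le> n"
  shows "phi {0..<n} (cycle_adj n) \<le> card (mds_words n)"
proof -
  let ?M = "{F. F \<subseteq> {0..<n} \<and> cycle_maximal_dissociated n F}"
  have "inj_on (indicator_word n) ?M"
    using inj_on_indicator_word by (rule inj_on_subset) auto
  moreover have "indicator_word n ` ?M \<subseteq> mds_words n"
    using mds_word_indicator_word[OF n] by (auto simp: mds_words_def)
  ultimately have "card ?M \<le> card (mds_words n)"
    using card_inj_on_le finite_mds_words by blast
  then show ?thesis
    unfolding phi_def maximal_dissociation_set_cycle_iff[OF n] by simp
qed

lemma phi_cycle_eq_card:
  assumes "3 \<le> n"
  shows "phi {0..<n} (cycle_adj n) =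
           card (set (filter (cycle_maximal_dissociated n) (map set (subseqs [0..<n]))))"
proof -
  have "set (map set (subseqs [0..<n])) = Pow {0..<n}"
    using subseqs_powset[of "[0..<n]"] by simp
  then show ?thesis
    unfolding phi_def maximal_dissociation_set_cycle_iff[OF assms] by (auto intro: arg_cong[where f = card])
qed

lemma phi_cycle_3: "phi {0..<3} (cycle_adj 3) = 3"
  by (subst phi_cycle_eq_card; code_simp)

lemma phi_cycle_4: "phi {0..<4} (cycle_adj 4) = 6"
  by (subst phi_cycle_eq_card; code_simp)

lemma phi_cycle_5: "phi {0..<5} (cycle_adj 5) = 5"
  by (subst phi_cycle_eq_card; code_simp)

lemma phi_cycle_6: "phi {0..<6} (cycle_adj 6) = 5"
  by (subst phi_cycle_eq_card; code_simp)

theorem lemma2p6: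
  fixes n :: nat
  assumes "n \<ge> 3"
  shows "real (phi {0..<n} (cycle_adj n)) \<le> 6 powr (real n / 4)
         \<and> (real (phi {0..<n} (cycle_adj n)) = 6 powr (real n / 4) \<longleftrightarrow> n = 4)"
proof (cases "n = 4")
  case True
  then show ?thesis
    using phi_cycle_4 by simp
next
  case not_4: False
  have "real (phi {0..<n} (cycle_adj n)) < 6 powr (real n / 4)"
  proof (cases "n \<le> 6")
    case True
    with not_4 assms have "n = 3 \<or> n = 5 \<or> n = 6"
      by auto
    then have "phi {0..<n} (cycle_adj n) ^ 4 < 6 ^ n"
      by (elim disjE) (simp_all add: phi_cycle_3 phi_cycle_5 phi_cycle_6)
    then show ?thesis
      by (rule less_6_powr_quarter)
  next
    case False
    then have "real (card (mds_words n)) < 6 powr (real n / 4)"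
      by (intro card_mds_words_less) simp
    moreover have "phi {0..<n} (cycle_adj n) \<le> card (mds_words n)"
      using assms by (rule phi_cycle_le_card_mds_words)
    ultimately show ?thesis
      by linarith
  qed
  with not_4 show ?thesis
    by simp
qed

end
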